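(* Let $M$ be a topological space. (a) Every continuous function $f:M\to\mathbb{R}$ induces a strongly regular spectral family $E^f:\mathbb{R}\to\mathcal{T}(M)$ by $E^f_\lambda:=\mathrm{int}(f^{-1}(]-\infty,\lambda]))$; its admissible domain $\mathcal{D}(E^f)$ equals $M$, and the function $f_{E^f}:M\to\mathbb{R}$ induced by $E^f$ is $f$. (b) Conversely, if $E:\mathbb{R}\to\mathcal{T}(M)$ is a strongly regular spectral family, then the induced function $f_E:\mathcal{D}(E)\to\mathbb{R}$ is continuous, and the spectral family $E^{f_E}$ in $\mathcal{T}(\mathcal{D}(E))$ induced by $f_E$ (i.e. $E^{f_E}_\lambda=\mathrm{int}_{\mathcal{D}(E)}f_E^{-1}(]-\infty,\lambda])$) satisfies $E^{f_E}_\lambda=E_\lambda\cap\mathcal{D}(E)$ for all $\lambda\in\mathbb{R}$.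
   Context: $\mathcal{T}(M)$ is the lattice of open subsets of $M$, with $\bigvee_\alpha U_\alpha=\bigcup_\alpha U_\alpha$ and $\bigwedge_\alpha U_\alpha=\mathrm{int}\bigcap_\alpha U_\alpha$. A spectral family in $\mathcal{T}(M)$ is a map $E:\mathbb{R}\to\mathcal{T}(M)$ with $E_\lambda\subseteq E_\mu$ for $\lambda\le\mu$, $E_\lambda=\bigwedge_{\mu>\lambda}E_\mu$, $\bigwedge_\lambda E_\lambda=\emptyset$, $\bigcup_\lambda E_\lambda=M$. It is strongly regular if $\overline{E_\lambda}\subseteq E_\mu$ whenever $\lambda<\mu$. Its admissible domain is $\mathcal{D}(E)=\{x\in M\mid\exists\lambda:x\notin E_\lambda\}$ and its induced function is $f_E(x)=\inf\{\lambda\mid x\in E_\lambda\}$, $x\in\mathcal{D}(E)$. *)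

theory Defs
  imports "HOL-Analysis.Analysis"
begin

text \<open>Meet in the lattice of open sets of X: interior of the intersection
  (relative to the topological space X).\<close>
definition open_meet :: "'a topology \<Rightarrow> 'a set set \<Rightarrow> 'a set" where
  "open_meet X \<U> = X interior_of (topspace X \<inter> \<Inter>\<U>)"

definition spectral_family :: "'a topology \<Rightarrow> (real \<Rightarrow> 'a set) \<Rightarrow> bool" where
  "spectral_family X E \<longleftrightarrow>
     (\<forall>l. openin X (E l)) \<and>
     (\<forall>l m. l \<le> m \<longrightarrow> E l \<subseteq> E m) \<and>
     (\<forall>l. E l = open_meet X (E ` {l<..})) \<and>
     open_meet X (range E) = {} \<and>
     (\<Union>l. E l) = topspace X"

definition strongly_regular :: "'a topology \<Rightarrow> (real \<Rightarrow> 'a set) \<Rightarrow> bool" where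
  "strongly_regular X E \<longleftrightarrow> spectral_family X E \<and>
     (\<forall>l m. l < m \<longrightarrow> X closure_of (E l) \<subseteq> E m)"

definition admissible_domain :: "'a topology \<Rightarrow> (real \<Rightarrow> 'a set) \<Rightarrow> 'a set" where
  "admissible_domain X E = {x \<in> topspace X. \<exists>l. x \<notin> E l}"

text \<open>Induced function; only meaningful on the admissible domain.\<close>
definition induced_fun :: "(real \<Rightarrow> 'a set) \<Rightarrow> 'a \<Rightarrow> real" where
  "induced_fun E x = Inf {l. x \<in> E l}"

definition fun_spectral :: "'a topology \<Rightarrow> ('a \<Rightarrow> real) \<Rightarrow> real \<Rightarrow> 'a set" where
  "fun_spectral X f l = X interior_of {x \<in> topspace X. f x \<le> l}"

end

theory Submission
  imports Defs
begin

text \<open>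
  For continuous \<open>f\<close> the set \<open>E\<^sup>f\<^sub>\<lambda>\<close> lies between the open set \<open>{f < \<lambda>}\<close> and the closed
  set \<open>{f \<le> \<lambda>}\<close>, which yields (a). Conversely, on \<open>\<D>(E)\<close> the induced function satisfies
  \<open>{f\<^sub>E < \<lambda>} \<subseteq> E\<^sub>\<lambda> \<subseteq> {f\<^sub>E \<le> \<lambda>}\<close>. Hence, within \<open>\<D>(E)\<close>, the set \<open>{f\<^sub>E < a}\<close> is the union
  of the \<open>E\<^sub>\<lambda>\<close> with \<open>\<lambda> < a\<close>, and by strong regularity \<open>{f\<^sub>E > a}\<close> is the union of the
  complements of the closures of the \<open>E\<^sub>\<lambda>\<close> with \<open>\<lambda> > a\<close>; so \<open>\<D>(E)\<close> is open and \<open>f\<^sub>E\<close> is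
  continuous. The same inclusions, together with \<open>E\<^sub>\<lambda>\<close> being the interior of the intersection
  of the \<open>E\<^sub>\<mu>\<close> with \<open>\<mu> > \<lambda>\<close>, show that the interior of \<open>{f\<^sub>E \<le> \<lambda>}\<close> is \<open>E\<^sub>\<lambda> \<inter> \<D>(E)\<close>.
\<close>

lemma induced_fun_eqI:
  assumes above: "\<And>l. c < l \<Longrightarrow> x \<in> E l"
    and below: "\<And>l. x \<in> E l \<Longrightarrow> c \<le> l"
  shows "induced_fun E x = c"
  unfolding induced_fun_def
proof (rule cInf_eq_non_empty)
  show "{l. x \<in> E l} \<noteq> {}"
    using above[of "c + 1"] by auto
  show "y \<le> c" if "\<And>l. l \<in> {l. x \<in> E l} \<Longrightarrow> y \<le> l" for y
    using that above by (auto intro: dense_ge)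
qed (use below in auto)

subsection \<open>The spectral family induced by a continuous function\<close>

lemma fun_spectral_subset_topspace: "fun_spectral X f l \<subseteq> topspace X"
  unfolding fun_spectral_def by (rule interior_of_subset_topspace)

lemma le_if_mem_fun_spectral: "x \<in> fun_spectral X f l \<Longrightarrow> f x \<le> l"
  unfolding fun_spectral_def using interior_of_subset by fastforce

lemma mem_fun_spectral_if_less:
  assumes "continuous_map X euclideanreal f" and "x \<in> topspace X" and "f x < l"
  shows "x \<in> fun_spectral X f l"
proof -
  have "{x \<in> topspace X. f x < l} \<subseteq> fun_spectral X f l"
    unfolding fun_spectral_def using assms(1)
    by (intro interior_of_maximal) (auto simp: continuous_map_upper_lower_semicontinuous_lt)
  with assms(2,3) show ?thesis
    by blast
qed

lemma mono_fun_spectral: "mono (fun_spectral X f)"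
  unfolding fun_spectral_def by (rule monoI, rule interior_of_mono) auto

lemma open_meet_fun_spectral_greaterThan:
  assumes f: "continuous_map X euclideanreal f"
  shows "open_meet X (fun_spectral X f ` {l<..}) = fun_spectral X f l"
proof -
  have "topspace X \<inter> \<Inter>(fun_spectral X f ` {l<..}) = {x \<in> topspace X. f x \<le> l}"
  proof (intro equalityI subsetI)
    fix x assume x: "x \<in> topspace X \<inter> \<Inter>(fun_spectral X f ` {l<..})"
    have "f x \<le> l"
    proof (rule dense_ge)
      fix m assume "l < m"
      with x have "x \<in> fun_spectral X f m"
        by blast
      then show "f x \<le> m"
        by (rule le_if_mem_fun_spectral)
    qed
    with x show "x \<in> {x \<in> topspace X. f x \<le> l}"
      by blast
  next
    fix x assume "x \<in> {x \<in> topspace X. f x \<le> l}"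
    then show "x \<in> topspace X \<inter> \<Inter>(fun_spectral X f ` {l<..})"
      using mem_fun_spectral_if_less[OF f] by force
  qed
  then show ?thesis
    unfolding open_meet_def fun_spectral_def by simp
qed

lemma strongly_regular_fun_spectral:
  assumes f: "continuous_map X euclideanreal f"
  shows "strongly_regular X (fun_spectral X f)"
  unfolding strongly_regular_def spectral_family_def
proof (intro conjI allI impI)
  let ?F = "fun_spectral X f"
  show "openin X (?F l)" for l
    by (simp add: fun_spectral_def)
  show "?F l \<subseteq> ?F m" if "l \<le> m" for l m
    using mono_fun_spectral that by (rule monoD)
  show "?F l = open_meet X (?F ` {l<..})" for l
    using open_meet_fun_spectral_greaterThan[OF f] by simp
  have "x \<notin> ?F (f x - 1)" for x
    using le_if_mem_fun_spectral by force
  then have "topspace X \<inter> \<Inter>(range ?F) = {}"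
    by blast
  then show "open_meet X (range ?F) = {}"
    by (simp add: open_meet_def)
  have "x \<in> ?F (f x + 1)" if "x \<in> topspace X" for x
    by (rule mem_fun_spectral_if_less[OF f that]) simp
  then have "topspace X \<subseteq> (\<Union>l. ?F l)"
    by blast
  moreover have "(\<Union>l. ?F l) \<subseteq> topspace X"
    by (intro UN_least fun_spectral_subset_topspace)
  ultimately show "(\<Union>l. ?F l) = topspace X"
    by (rule antisym[rotated])
  show "X closure_of ?F l \<subseteq> ?F m" if "l < m" for l m
  proof -
    have "?F l \<subseteq> {x \<in> topspace X. f x \<le> l}"
      using fun_spectral_subset_topspace[of X f l] le_if_mem_fun_spectral[of _ X f l] by blast
    moreover have "closedin X {x \<in> topspace X. f x \<le> l}"
      using f by (simp add: continuous_map_upper_lower_semicontinuous_le)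
    ultimately have "X closure_of ?F l \<subseteq> {x \<in> topspace X. f x \<le> l}"
      by (rule closure_of_minimal)
    also have "\<dots> \<subseteq> ?F m"
      using mem_fun_spectral_if_less[OF f] that by force
    finally show ?thesis .
  qed
qed

lemma admissible_domain_fun_spectral: "admissible_domain X (fun_spectral X f) = topspace X"
proof -
  have "x \<notin> fun_spectral X f (f x - 1)" for x
    using le_if_mem_fun_spectral by force
  then show ?thesis
    unfolding admissible_domain_def by blast
qed

lemma induced_fun_fun_spectral:
  assumes f: "continuous_map X euclideanreal f" and x: "x \<in> topspace X"
  shows "induced_fun (fun_spectral X f) x = f x"
  using mem_fun_spectral_if_less[OF f x] le_if_mem_fun_spectral
  by (rule induced_fun_eqI)

subsection \<open>The function induced by a strongly regular spectral family\<close>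

lemma spectral_family_openin: "spectral_family X E \<Longrightarrow> openin X (E l)"
  unfolding spectral_family_def by (elim conjE) (rule spec)

lemma spectral_family_mono: "spectral_family X E \<Longrightarrow> mono E"
  unfolding spectral_family_def mono_def by (elim conjE) assumption

lemma spectral_family_eq_open_meet: "spectral_family X E \<Longrightarrow> E l = open_meet X (E ` {l<..})"
  unfolding spectral_family_def by (elim conjE) (rule spec)

lemma spectral_family_Union: "spectral_family X E \<Longrightarrow> (\<Union>l. E l) = topspace X"
  unfolding spectral_family_def by (elim conjE) assumption

lemma strongly_regular_imp_spectral_family: "strongly_regular X E \<Longrightarrow> spectral_family X E"
  by (simp add: strongly_regular_def)

lemma strongly_regular_closure_subset:
  "strongly_regular X E \<Longrightarrow> l < m \<Longrightarrow> X closure_of E l \<subseteq> E m"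
  by (simp add: strongly_regular_def)

lemma admissible_domain_subset_topspace: "admissible_domain X E \<subseteq> topspace X"
  by (auto simp: admissible_domain_def)

lemma bdd_below_mem_mono:
  fixes E :: "'b::linorder \<Rightarrow> 'a set"
  assumes "mono E" and "x \<notin> E k"
  shows "bdd_below {l. x \<in> E l}"
proof (rule bdd_belowI)
  show "k \<le> l" if "l \<in> {l. x \<in> E l}" for l
  proof (rule ccontr)
    assume "\<not> k \<le> l"
    then have "E l \<subseteq> E k"
      using \<open>mono E\<close> by (meson monoD nle_le)
    then show False
      using assms(2) that by blast
  qed
qed

lemma bdd_below_mem_admissible_domain:
  assumes "spectral_family X E" and "x \<in> admissible_domain X E"
  shows "bdd_below {l. x \<in> E l}"
proof -
  obtain k where "x \<notin> E k"
    using assms(2) unfolding admissible_domain_def by blast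
  then show ?thesis
    by (rule bdd_below_mem_mono[OF spectral_family_mono[OF assms(1)]])
qed

lemma induced_fun_le:
  assumes "spectral_family X E" and "x \<in> admissible_domain X E" and "x \<in> E l"
  shows "induced_fun E x \<le> l"
  unfolding induced_fun_def
  using bdd_below_mem_admissible_domain[OF assms(1,2)] assms(3) by (simp add: cInf_lower)

lemma mem_if_induced_fun_less:
  assumes E: "spectral_family X E" and x: "x \<in> admissible_domain X E"
    and less: "induced_fun E x < l"
  shows "x \<in> E l"
proof -
  have "x \<in> topspace X"
    using x by (simp add: admissible_domain_def)
  then have "x \<in> (\<Union>l. E l)"
    by (simp only: spectral_family_Union[OF E])
  then have "{l. x \<in> E l} \<noteq> {}"
    by blast
  then obtain m where "x \<in> E m" "m < l"
    using less bdd_below_mem_admissible_domain[OF E x]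
    unfolding induced_fun_def by (auto simp: cInf_less_iff)
  then show ?thesis
    using monoD[OF spectral_family_mono[OF E], of m l] by auto
qed

lemma admissible_domain_eq_Union_closure:
  assumes "strongly_regular X E"
  shows "admissible_domain X E = (\<Union>l. topspace X - X closure_of E l)"
proof (intro equalityI subsetI)
  fix x assume "x \<in> admissible_domain X E"
  then obtain l where "x \<in> topspace X" "x \<notin> E l"
    unfolding admissible_domain_def by blast
  moreover have "X closure_of E (l - 1) \<subseteq> E l"
    using assms by (rule strongly_regular_closure_subset) simp
  ultimately show "x \<in> (\<Union>l. topspace X - X closure_of E l)"
    by blast
next
  fix x assume "x \<in> (\<Union>l. topspace X - X closure_of E l)"
  then obtain l where "x \<in> topspace X" "x \<notin> X closure_of E l"
    by blast
  moreover have "topspace X \<inter> E l \<subseteq> X closure_of E l"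
    by (rule closure_of_subset_Int)
  ultimately show "x \<in> admissible_domain X E"
    unfolding admissible_domain_def by blast
qed

lemma openin_admissible_domain:
  assumes "strongly_regular X E"
  shows "openin X (admissible_domain X E)"
  unfolding admissible_domain_eq_Union_closure[OF assms]
  by (intro openin_Union) (blast intro: openin_diff[OF openin_topspace closedin_closure_of])

lemma induced_fun_less_eq_Union:
  assumes E: "spectral_family X E"
  shows "{x \<in> admissible_domain X E. induced_fun E x < a}
           = admissible_domain X E \<inter> (\<Union>l\<in>{..<a}. E l)"
proof (intro equalityI subsetI)
  fix x assume "x \<in> {x \<in> admissible_domain X E. induced_fun E x < a}"
  then have x: "x \<in> admissible_domain X E" and less: "induced_fun E x < a"
    by auto
  obtain l where "induced_fun E x < l" "l < a"
    using dense[OF less] by blast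
  with x show "x \<in> admissible_domain X E \<inter> (\<Union>l\<in>{..<a}. E l)"
    using mem_if_induced_fun_less[OF E x] by blast
next
  fix x assume "x \<in> admissible_domain X E \<inter> (\<Union>l\<in>{..<a}. E l)"
  then obtain l where x: "x \<in> admissible_domain X E" and "l < a" "x \<in> E l"
    by blast
  then have "induced_fun E x < a"
    using induced_fun_le[OF E x] by fastforce
  with x show "x \<in> {x \<in> admissible_domain X E. induced_fun E x < a}"
    by blast
qed

lemma induced_fun_greater_eq_Union:
  assumes sr: "strongly_regular X E"
  shows "{x \<in> admissible_domain X E. a < induced_fun E x}
           = (\<Union>l\<in>{a<..}. topspace X - X closure_of E l)"
proof -
  note E = strongly_regular_imp_spectral_family[OF sr]
  show ?thesis
  proof (intro equalityI subsetI)
    fix x assume "x \<in> {x \<in> admissible_domain X E. a < induced_fun E x}"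
    then have x: "x \<in> admissible_domain X E" and greater: "a < induced_fun E x"
      by auto
    obtain l m where "a < l" "l < m" "m < induced_fun E x"
      using dense greater by meson
    moreover have "X closure_of E l \<subseteq> E m"
      using sr \<open>l < m\<close> by (rule strongly_regular_closure_subset)
    moreover have "x \<notin> E m"
      using induced_fun_le[OF E x] \<open>m < induced_fun E x\<close> by fastforce
    ultimately show "x \<in> (\<Union>l\<in>{a<..}. topspace X - X closure_of E l)"
      using x admissible_domain_subset_topspace[of X E] by blast
  next
    fix x assume "x \<in> (\<Union>l\<in>{a<..}. topspace X - X closure_of E l)"
    then obtain l where l: "a < l" "x \<in> topspace X - X closure_of E l"
      by blast
    then have x: "x \<in> admissible_domain X E"
      unfolding admissible_domain_eq_Union_closure[OF sr] by blast
    have "x \<notin> E l"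
      using l closure_of_subset_Int[of X "E l"] by blast
    then have "l \<le> induced_fun E x"
      using mem_if_induced_fun_less[OF E x] by (meson not_le)
    with l x show "x \<in> {x \<in> admissible_domain X E. a < induced_fun E x}"
      by simp
  qed
qed

lemma continuous_map_induced_fun:
  assumes sr: "strongly_regular X E"
  shows "continuous_map (subtopology X (admissible_domain X E)) euclideanreal (induced_fun E)"
proof -
  let ?D = "admissible_domain X E"
  note E = strongly_regular_imp_spectral_family[OF sr]
  note open_sub = openin_open_subtopology[OF openin_admissible_domain[OF sr]]
  have "openin X {x \<in> ?D. a < induced_fun E x}" for a
    unfolding induced_fun_greater_eq_Union[OF sr]
    by (intro openin_Union) (blast intro: openin_diff[OF openin_topspace closedin_closure_of])
  then have "openin (subtopology X ?D) {x \<in> ?D. a < induced_fun E x}" for a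
    unfolding open_sub by blast
  moreover have "openin X {x \<in> ?D. induced_fun E x < a}" for a
    unfolding induced_fun_less_eq_Union[OF E]
    by (intro openin_Int openin_admissible_domain[OF sr] openin_Union)
      (blast intro: spectral_family_openin[OF E])
  then have "openin (subtopology X ?D) {x \<in> ?D. induced_fun E x < a}" for a
    unfolding open_sub by blast
  moreover have "topspace (subtopology X ?D) = ?D"
    using admissible_domain_subset_topspace[of X E] by (rule topspace_subtopology_subset)
  ultimately show ?thesis
    by (simp add: continuous_map_upper_lower_semicontinuous_lt)
qed

lemma fun_spectral_induced_fun:
  assumes sr: "strongly_regular X E"
  shows "fun_spectral (subtopology X (admissible_domain X E)) (induced_fun E) l
           = E l \<inter> admissible_domain X E"
proof -
  let ?D = "admissible_domain X E"
  let ?S = "{x \<in> ?D. induced_fun E x \<le> l}"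
  note E = strongly_regular_imp_spectral_family[OF sr]
  have "topspace (subtopology X ?D) = ?D"
    by (rule topspace_subtopology_subset[OF admissible_domain_subset_topspace])
  then have "fun_spectral (subtopology X ?D) (induced_fun E) l = ?D \<inter> X interior_of ?S"
    unfolding fun_spectral_def interior_of_subtopology_open[OF openin_admissible_domain[OF sr]]
    by (simp only:)
  also have "\<dots> = E l \<inter> ?D"
  proof (intro equalityI)
    have "?S \<subseteq> topspace X \<inter> \<Inter>(E ` {l<..})"
      using mem_if_induced_fun_less[OF E] admissible_domain_subset_topspace[of X E] by fastforce
    then have "X interior_of ?S \<subseteq> open_meet X (E ` {l<..})"
      unfolding open_meet_def by (rule interior_of_mono)
    also have "\<dots> = E l"
      by (rule spectral_family_eq_open_meet[OF E, symmetric])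
    finally show "?D \<inter> X interior_of ?S \<subseteq> E l \<inter> ?D"
      by blast
    have "E l \<inter> ?D \<subseteq> ?S"
      using induced_fun_le[OF E] by blast
    moreover have "openin X (E l \<inter> ?D)"
      by (intro openin_Int spectral_family_openin[OF E] openin_admissible_domain[OF sr])
    ultimately have "E l \<inter> ?D \<subseteq> X interior_of ?S"
      by (rule interior_of_maximal)
    then show "E l \<inter> ?D \<subseteq> ?D \<inter> X interior_of ?S"
      by blast
  qed
  finally show ?thesis .
qed

theorem theorem2p35:
  fixes X :: "'a topology"
  shows "(\<forall>f. continuous_map X euclideanreal f \<longrightarrow>
            strongly_regular X (fun_spectral X f) \<and>
            admissible_domain X (fun_spectral X f) = topspace X \<and>
            (\<forall>x \<in> topspace X. induced_fun (fun_spectral X f) x = f x))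
       \<and> (\<forall>E. strongly_regular X E \<longrightarrow>
            continuous_map (subtopology X (admissible_domain X E)) euclideanreal (induced_fun E) \<and>
            (\<forall>l. fun_spectral (subtopology X (admissible_domain X E)) (induced_fun E) l
                   = E l \<inter> admissible_domain X E))"
proof (intro conjI allI impI ballI)
  fix f assume f: "continuous_map X euclideanreal f"
  then show "strongly_regular X (fun_spectral X f)"
    by (rule strongly_regular_fun_spectral)
  show "admissible_domain X (fun_spectral X f) = topspace X"
    by (rule admissible_domain_fun_spectral)
  show "induced_fun (fun_spectral X f) x = f x" if "x \<in> topspace X" for x
    using f that by (rule induced_fun_fun_spectral)
next
  fix E assume E: "strongly_regular X E"
  then show "continuous_map (subtopology X (admissible_domain X E)) euclideanreal (induced_fun E)"
    by (rule continuous_map_induced_fun)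
  show "fun_spectral (subtopology X (admissible_domain X E)) (induced_fun E) l
          = E l \<inter> admissible_domain X E" for l
    using E by (rule fun_spectral_induced_fun)
qed

end
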